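(* Fix $p\ge 1$, $\beta^*\in\mathbb{R}^p$ with support $S^*=\{j:\beta^*_j\neq 0\}$, and $\sigma^2>0$. Then $\mathsf{R}_{\mathtt{oos}}(\beta^*;\mathcal{U}_{\beta^*,\sigma^2})=\sigma^2$, and for every $\beta\in\mathbb{R}^p$, $$\sigma^2\|\beta-\beta^*\|_2^2\;\le\;\mathsf{R}_{\mathtt{oos}}(\beta;\mathcal{U}_{\beta^*,\sigma^2})-\mathsf{R}_{\mathtt{oos}}(\beta^*;\mathcal{U}_{\beta^*,\sigma^2})\;\le\;\sigma^2p^2\|\beta-\beta^*\|_2^2+2\sigma^2p\,\|\beta_{[p]\setminus S^*}\|_2 .$$
   Context: For $S\subseteq[p]$ and $x\in\mathbb{R}^p$, $x_S$ is the subvector of coordinates in $S$. $\mathcal{U}_{\beta^*,\sigma^2}$ is the set of probability distributions $\mu$ of $(x,y)\in\mathbb{R}^p\times\mathbb{R}$ such that $\mathbb{E}_\mu[y\mid x_{S^*}]=(\beta^*_{S^*})^\top x_{S^*}$ and $\mathrm{Var}_\mu[y\mid x_{S^*}]\le\sigma^2$ for $\mu$-a.e. $x$, and $\mathbb{E}_\mu[x_j^2]\le\sigma^2$ for all $j\in[p]$. The out-of-sample risk is $\mathsf{R}_{\mathtt{oos}}(\beta;\mathcal{U}_{\beta^*,\sigma^2})=\sup_{\mu\in\mathcal{U}_{\beta^*,\sigma^2}}\mathbb{E}_{(x,y)\sim\mu}[|y-\beta^\top x|^2]$. *)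

theory Defs
  imports "HOL-Probability.Probability"
begin

definition supp :: "real^'p::finite \<Rightarrow> 'p set" where
  "supp b = {j. b $ j \<noteq> 0}"

(* x_S, realised as the vector agreeing with x on S and 0 off S *)
definition proj :: "'p::finite set \<Rightarrow> real^'p \<Rightarrow> real^'p" where
  "proj S x = (\<chi> j. if j \<in> S then x $ j else 0)"

definition sigma_xS :: "'p::finite set \<Rightarrow> ((real^'p) \<times> real) measure \<Rightarrow> ((real^'p) \<times> real) measure" where
  "sigma_xS S M = vimage_algebra (space M) (\<lambda>z. proj S (fst z)) borel"

definition U_set :: "real^'p::finite \<Rightarrow> real \<Rightarrow> ((real^'p) \<times> real) measure set" where
  "U_set bstar s2 = {M. prob_space M \<and> sets M = sets borel \<and>
     integrable M snd \<and>
     (AE z in M. real_cond_exp M (sigma_xS (supp bstar) M) snd z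
                   = proj (supp bstar) bstar \<bullet> proj (supp bstar) (fst z)) \<and>
     (AE z in M. nn_cond_exp M (sigma_xS (supp bstar) M)
                   (\<lambda>z. ennreal ((snd z - proj (supp bstar) bstar \<bullet> proj (supp bstar) (fst z))\<^sup>2)) z
                 \<le> ennreal s2) \<and>
     (\<forall>j. (\<integral>\<^sup>+ z. ennreal ((fst z $ j)\<^sup>2) \<partial>M) \<le> ennreal s2)}"

definition R_oos :: "real^'p::finite \<Rightarrow> ((real^'p) \<times> real) measure set \<Rightarrow> ennreal" where
  "R_oos b U = (SUP M\<in>U. \<integral>\<^sup>+ z. ennreal ((snd z - b \<bullet> fst z)\<^sup>2) \<partial>M)"

end

theory Submission
  imports Defs
begin

text \<open>
  Write the noise as \<open>e = y - \<beta>\<^sup>* \<bullet> x\<close>, so that the residual of \<open>\<beta>\<close> is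
  \<open>e + (\<beta>\<^sup>* - \<beta>) \<bullet> x\<close>. The cross term of \<open>e\<close> with the part of \<open>(\<beta>\<^sup>* - \<beta>) \<bullet> x\<close> that only
  depends on \<open>x\<^sub>S\<^sub>*\<close> has mean zero, since \<open>E[y | x\<^sub>S\<^sub>*] = \<beta>\<^sup>* \<bullet> x\<close>; everything else is
  controlled by Cauchy-Schwarz together with \<open>E e\<^sup>2 \<le> \<sigma>\<^sup>2\<close> and \<open>E \<parallel>x\<parallel>\<^sup>2 \<le> p \<sigma>\<^sup>2\<close>.
  Conversely, the law with \<open>x = v\<close> deterministic and \<open>y = \<beta>\<^sup>* \<bullet> v \<plusminus> \<sigma>\<close> with equal
  probabilities belongs to the uncertainty set whenever all \<open>v\<^sub>j\<^sup>2 \<le> \<sigma>\<^sup>2\<close>, and has risk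
  \<open>\<sigma>\<^sup>2 + ((\<beta>\<^sup>* - \<beta>) \<bullet> v)\<^sup>2\<close>; the choice \<open>v = \<sigma> sgn (\<beta>\<^sup>* - \<beta>)\<close> gives the lower bound.
\<close>

lemma linear_proj: "linear (proj S)"
  by (rule linearI) (auto simp: proj_def vec_eq_iff)

lemma continuous_on_proj [continuous_intros]:
  "continuous_on A f \<Longrightarrow> continuous_on A (\<lambda>x. proj S (f x))"
  using linear_proj linear_conv_bounded_linear bounded_linear.continuous_on by blast

lemma proj_supp_self: "proj (supp b) b = b"
  by (auto simp: proj_def supp_def vec_eq_iff)

lemma proj_compl_supp_self: "proj (- supp b) b = 0"
  by (auto simp: proj_def supp_def vec_eq_iff)

lemma inner_proj_add_proj_compl: "a \<bullet> proj S x + proj (- S) a \<bullet> x = a \<bullet> x"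
  unfolding inner_vec_def proj_def by (simp add: sum.distrib[symmetric]) (intro sum.cong, auto)

lemma inner_proj_supp: "b \<bullet> proj (supp b) x = b \<bullet> x"
  using inner_proj_add_proj_compl[of b "supp b" x] by (simp add: proj_compl_supp_self)

lemma norm_proj_le: "norm (proj S x) \<le> norm x"
proof -
  have "(norm (proj S x))\<^sup>2 \<le> (norm x)\<^sup>2"
    unfolding power2_norm_eq_inner by (auto simp: inner_vec_def proj_def intro!: sum_mono)
  then show ?thesis
    by (rule power2_le_imp_le) simp
qed

lemma norm_sq_eq_sum_components: "(norm x)\<^sup>2 = (\<Sum>j\<in>UNIV. (x $ j)\<^sup>2)"
  unfolding power2_norm_eq_inner by (simp add: inner_vec_def power2_eq_square)

lemma inner_sq_le_norm_sq: "(a \<bullet> x)\<^sup>2 \<le> (norm a)\<^sup>2 * (norm x)\<^sup>2"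
  using Cauchy_Schwarz_ineq[of a x] by (simp add: power2_norm_eq_inner)

lemma abs_mult_le_sum_squares: "\<bar>a * b\<bar> \<le> a\<^sup>2 + (b::real)\<^sup>2"
proof -
  have "2 * (\<bar>a\<bar> * \<bar>b\<bar>) \<le> a\<^sup>2 + b\<^sup>2"
    using sum_squares_bound[of "\<bar>a\<bar>" "\<bar>b\<bar>"] by (simp add: mult.assoc)
  moreover have "0 \<le> \<bar>a\<bar> * \<bar>b\<bar>"
    by simp
  ultimately show ?thesis
    unfolding abs_mult by linarith
qed

lemma sq_residual_le:
  fixes bstar b x :: "real^'p" and e :: real
  shows "(e + (bstar - b) \<bullet> x)\<^sup>2 \<le> e\<^sup>2 + 2 * (e * ((bstar - b) \<bullet> proj (supp bstar) x))
           + norm (proj (- supp bstar) b) * (e\<^sup>2 + (norm x)\<^sup>2) + (norm (bstar - b))\<^sup>2 * (norm x)\<^sup>2"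
proof -
  define d where "d = bstar - b"
  define c where "c = norm (proj (- supp bstar) b)"
  define w where "w = proj (- supp bstar) d \<bullet> x"
  have d_x: "d \<bullet> x = d \<bullet> proj (supp bstar) x + w"
    unfolding w_def by (rule inner_proj_add_proj_compl[symmetric])
  have "\<bar>w\<bar> \<le> c * norm x"
    using Cauchy_Schwarz_ineq2[of "proj (- supp bstar) b" x]
    by (simp add: w_def c_def d_def linear_diff[OF linear_proj] proj_compl_supp_self)
  then have "e * w \<le> \<bar>e\<bar> * (c * norm x)"
    by (metis abs_ge_self abs_ge_zero abs_mult mult_left_mono order.trans)
  also have "\<dots> \<le> c * (e\<^sup>2 + (norm x)\<^sup>2) / 2"
    using sum_squares_bound[of "\<bar>e\<bar>" "norm x"] mult_left_mono[OF _ norm_ge_zero, of _ _ "proj (- supp bstar) b"]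
    by (fastforce simp: c_def algebra_simps)
  finally have "2 * (e * w) \<le> c * (e\<^sup>2 + (norm x)\<^sup>2)"
    by simp
  moreover have "(d \<bullet> x)\<^sup>2 \<le> (norm d)\<^sup>2 * (norm x)\<^sup>2"
    by (rule inner_sq_le_norm_sq)
  ultimately show ?thesis
    unfolding d_def[symmetric] c_def[symmetric] by (simp add: power2_sum d_x algebra_simps)
qed

lemma borel_measurable_continuous_sets_borel:
  "sets M = sets borel \<Longrightarrow> continuous_on UNIV f \<Longrightarrow> f \<in> borel_measurable M"
  using measurable_cong_sets[of M borel borel borel] borel_measurable_continuous_onI by blast

lemma subalgebra_sigma_xS:
  assumes "sets M = sets borel"
  shows "subalgebra M (sigma_xS S M)"
proof -
  have "(\<lambda>z. proj S (fst z)) \<in> borel_measurable M"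
    using assms by (rule borel_measurable_continuous_sets_borel) (intro continuous_intros)
  then show ?thesis
    unfolding subalgebra_def sigma_xS_def using sets_image_in_sets[OF refl] by simp
qed

lemma borel_measurable_sigma_xS:
  assumes "continuous_on UNIV h"
  shows "(\<lambda>z. h (proj S (fst z))) \<in> borel_measurable (sigma_xS S M)"
proof -
  have "(\<lambda>z. proj S (fst z)) \<in> borel_measurable (sigma_xS S M)"
    unfolding sigma_xS_def by (rule measurable_vimage_algebra1) simp
  from measurable_comp[OF this borel_measurable_continuous_onI[OF assms]] show ?thesis
    unfolding o_def .
qed

lemma integral_le_of_nn_integral_le:
  fixes f :: "'a \<Rightarrow> real"
  assumes [measurable]: "f \<in> borel_measurable M" and "\<And>z. 0 \<le> f z" "0 \<le> c"
    and le: "(\<integral>\<^sup>+ z. ennreal (f z) \<partial>M) \<le> ennreal c"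
  shows "integrable M f \<and> integral\<^sup>L M f \<le> c"
proof -
  have int: "integrable M f"
    by (rule integrableI_bounded) (use assms in \<open>auto simp: top_unique intro: le_less_trans\<close>)
  then have "ennreal (integral\<^sup>L M f) \<le> ennreal c"
    using nn_integral_eq_integral[OF int] assms by simp
  with assms int show ?thesis
    by (simp add: ennreal_le_iff)
qed

lemma (in sigma_finite_subalgebra) nn_integral_le_of_nn_cond_exp_le:
  assumes [measurable]: "f \<in> borel_measurable M"
    and "AE z in M. nn_cond_exp M F f z \<le> c"
  shows "(\<integral>\<^sup>+ z. f z \<partial>M) \<le> (\<integral>\<^sup>+ z. c \<partial>M)"
proof -
  have "(\<integral>\<^sup>+ z. f z \<partial>M) = (\<integral>\<^sup>+ z. 1 * nn_cond_exp M F f z \<partial>M)"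
    by (subst nn_cond_exp_intg) auto
  also have "\<dots> \<le> (\<integral>\<^sup>+ z. c \<partial>M)"
    using assms(2) by (intro nn_integral_mono_AE) auto
  finally show ?thesis .
qed

lemma (in sigma_finite_subalgebra) integral_mult_real_cond_exp_AE_eq:
  assumes "integrable M (\<lambda>z. u z * f z)" and [measurable]: "u \<in> borel_measurable F"
    "f \<in> borel_measurable M" "g \<in> borel_measurable M"
    and "AE z in M. real_cond_exp M F f z = g z"
  shows "(\<integral>z. u z * f z \<partial>M) = (\<integral>z. u z * g z \<partial>M)"
proof -
  have [measurable]: "u \<in> borel_measurable M"
    by (rule measurable_from_subalg[OF subalg assms(2)])
  have "(\<integral>z. u z * f z \<partial>M) = (\<integral>z. u z * real_cond_exp M F f z \<partial>M)"
    using real_cond_exp_intg(2)[OF assms(1-3)] by simp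
  also have "\<dots> = (\<integral>z. u z * g z \<partial>M)"
    using assms(5) by (intro integral_cong_AE) auto
  finally show ?thesis .
qed

lemma U_set_eq:
  "U_set bstar s2 = {M. prob_space M \<and> sets M = sets borel \<and> integrable M snd \<and>
     (AE z in M. real_cond_exp M (sigma_xS (supp bstar) M) snd z = bstar \<bullet> fst z) \<and>
     (AE z in M. nn_cond_exp M (sigma_xS (supp bstar) M)
                   (\<lambda>z. ennreal ((snd z - bstar \<bullet> fst z)\<^sup>2)) z \<le> ennreal s2) \<and>
     (\<forall>j. (\<integral>\<^sup>+ z. ennreal ((fst z $ j)\<^sup>2) \<partial>M) \<le> ennreal s2)}"
  by (simp add: U_set_def proj_supp_self inner_proj_supp)

lemma U_set_noise_second_moment:
  assumes "M \<in> U_set bstar s2" "0 \<le> s2"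
  shows "integrable M (\<lambda>z. (snd z - bstar \<bullet> fst z)\<^sup>2) \<and> (\<integral>z. (snd z - bstar \<bullet> fst z)\<^sup>2 \<partial>M) \<le> s2"
proof -
  from assms(1) have "prob_space M" and sets: "sets M = sets borel"
    and cond_var: "AE z in M. nn_cond_exp M (sigma_xS (supp bstar) M)
                     (\<lambda>z. ennreal ((snd z - bstar \<bullet> fst z)\<^sup>2)) z \<le> ennreal s2"
    unfolding U_set_eq by auto
  then interpret prob_space M
    by simp
  interpret finite_measure_subalgebra M "sigma_xS (supp bstar) M"
    by unfold_locales (rule subalgebra_sigma_xS[OF sets])
  have [measurable]: "(\<lambda>z. (snd z - bstar \<bullet> fst z)\<^sup>2) \<in> borel_measurable M"
    using sets by (rule borel_measurable_continuous_sets_borel) (intro continuous_intros)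
  have "(\<integral>\<^sup>+ z. ennreal ((snd z - bstar \<bullet> fst z)\<^sup>2) \<partial>M) \<le> ennreal s2"
    using nn_integral_le_of_nn_cond_exp_le[OF _ cond_var] by (simp add: emeasure_space_1)
  then show ?thesis
    using assms(2) by (intro integral_le_of_nn_integral_le) auto
qed

lemma U_set_covariate_second_moment:
  fixes bstar :: "real^'p" and s2 :: real
  assumes "M \<in> U_set bstar s2" "0 \<le> s2"
  shows "integrable M (\<lambda>z. (norm (fst z))\<^sup>2) \<and> (\<integral>z. (norm (fst z))\<^sup>2 \<partial>M) \<le> CARD('p) * s2"
proof -
  from assms(1) have sets: "sets M = sets borel"
    and moment: "\<And>j. (\<integral>\<^sup>+ z. ennreal ((fst z $ j)\<^sup>2) \<partial>M) \<le> ennreal s2"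
    unfolding U_set_eq by auto
  have "integrable M (\<lambda>z. (fst z $ j)\<^sup>2) \<and> (\<integral>z. (fst z $ j)\<^sup>2 \<partial>M) \<le> s2" for j
    using assms(2) moment[of j]
    by (intro integral_le_of_nn_integral_le borel_measurable_continuous_sets_borel[OF sets])
       (auto intro!: continuous_intros)
  then show ?thesis
    unfolding norm_sq_eq_sum_components
    by (auto simp: Bochner_Integration.integral_sum intro!: sum_bounded_above)
qed

lemma U_set_noise_orthogonal:
  fixes bstar a :: "real^'p"
  assumes "M \<in> U_set bstar s2" "0 \<le> s2"
  defines "e \<equiv> \<lambda>z. snd z - bstar \<bullet> fst z" and "u \<equiv> \<lambda>z. a \<bullet> proj (supp bstar) (fst z)"
  shows "integrable M (\<lambda>z. e z * u z) \<and> (\<integral>z. e z * u z \<partial>M) = 0"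
proof -
  from assms(1) have "prob_space M" and sets: "sets M = sets borel" and "integrable M snd"
    and cond_exp: "AE z in M. real_cond_exp M (sigma_xS (supp bstar) M) snd z = bstar \<bullet> fst z"
    unfolding U_set_eq by auto
  then interpret prob_space M
    by simp
  interpret finite_measure_subalgebra M "sigma_xS (supp bstar) M"
    by unfold_locales (rule subalgebra_sigma_xS[OF sets])
  have mble: "continuous_on UNIV f \<Longrightarrow> f \<in> borel_measurable M" for f :: "_ \<Rightarrow> real"
    using sets by (rule borel_measurable_continuous_sets_borel)
  have [measurable]: "e \<in> borel_measurable M" "u \<in> borel_measurable M" "snd \<in> borel_measurable M"
    "(\<lambda>z. bstar \<bullet> fst z) \<in> borel_measurable M"
    unfolding e_def u_def by (auto intro!: mble continuous_intros)
  have u_F: "u \<in> borel_measurable (sigma_xS (supp bstar) M)"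
    unfolding u_def by (rule borel_measurable_sigma_xS) (intro continuous_intros)
  have u_sq_le: "(u z)\<^sup>2 \<le> (norm a)\<^sup>2 * (norm (fst z))\<^sup>2" for z
  proof -
    have "(u z)\<^sup>2 \<le> (norm a)\<^sup>2 * (norm (proj (supp bstar) (fst z)))\<^sup>2"
      unfolding u_def by (rule inner_sq_le_norm_sq)
    also have "\<dots> \<le> (norm a)\<^sup>2 * (norm (fst z))\<^sup>2"
      by (intro mult_left_mono power_mono norm_proj_le) simp_all
    finally show ?thesis .
  qed
  have v_sq_le: "(bstar \<bullet> fst z)\<^sup>2 \<le> (norm bstar)\<^sup>2 * (norm (fst z))\<^sup>2" for z
    by (rule inner_sq_le_norm_sq)
  have N: "integrable M (\<lambda>z. (norm (fst z))\<^sup>2)"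
    using U_set_covariate_second_moment[OF assms(1,2)] by simp
  have E: "integrable M (\<lambda>z. (e z)\<^sup>2)"
    using U_set_noise_second_moment[OF assms(1,2)] by (simp add: e_def)
  have int_ue: "integrable M (\<lambda>z. u z * e z)"
  proof (rule Bochner_Integration.integrable_bound)
    show "integrable M (\<lambda>z. (norm a)\<^sup>2 * (norm (fst z))\<^sup>2 + (e z)\<^sup>2)"
      using N E by simp
    have "\<bar>u z * e z\<bar> \<le> (norm a)\<^sup>2 * (norm (fst z))\<^sup>2 + (e z)\<^sup>2" for z
      using abs_mult_le_sum_squares[of "u z" "e z"] u_sq_le[of z] by linarith
    then show "AE z in M. norm (u z * e z) \<le> norm ((norm a)\<^sup>2 * (norm (fst z))\<^sup>2 + (e z)\<^sup>2)"
      by (intro AE_I2) force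
  qed measurable
  have int_uv: "integrable M (\<lambda>z. u z * (bstar \<bullet> fst z))"
  proof (rule Bochner_Integration.integrable_bound)
    show "integrable M (\<lambda>z. ((norm a)\<^sup>2 + (norm bstar)\<^sup>2) * (norm (fst z))\<^sup>2)"
      using N by simp
    have "\<bar>u z * (bstar \<bullet> fst z)\<bar> \<le> ((norm a)\<^sup>2 + (norm bstar)\<^sup>2) * (norm (fst z))\<^sup>2" for z
      using abs_mult_le_sum_squares[of "u z" "bstar \<bullet> fst z"] u_sq_le[of z] v_sq_le[of z]
      unfolding distrib_right by linarith
    then show "AE z in M. norm (u z * (bstar \<bullet> fst z))
                 \<le> norm (((norm a)\<^sup>2 + (norm bstar)\<^sup>2) * (norm (fst z))\<^sup>2)"
      by (intro AE_I2) force
  qed measurable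
  have int_us: "integrable M (\<lambda>z. u z * snd z)"
    using Bochner_Integration.integrable_add[OF int_ue int_uv] by (simp add: e_def algebra_simps)
  have "(\<integral>z. u z * snd z \<partial>M) = (\<integral>z. u z * (bstar \<bullet> fst z) \<partial>M)"
    by (rule integral_mult_real_cond_exp_AE_eq[OF int_us u_F _ _ cond_exp]) auto
  then have "(\<integral>z. u z * e z \<partial>M) = 0"
    using int_us int_uv by (simp add: e_def right_diff_distrib)
  with int_ue show ?thesis
    by (simp add: mult.commute)
qed

lemma U_set_risk_le:
  fixes bstar b :: "real^'p" and s2 :: real
  assumes "M \<in> U_set bstar s2" "0 \<le> s2"
  shows "(\<integral>\<^sup>+ z. ennreal ((snd z - b \<bullet> fst z)\<^sup>2) \<partial>M) \<le>
    ennreal (s2 + (s2 * (real CARD('p))\<^sup>2 * (norm (b - bstar))\<^sup>2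
                  + 2 * s2 * real CARD('p) * norm (proj (- supp bstar) b)))"
proof -
  define p where "p = real CARD('p)"
  define c where "c = norm (proj (- supp bstar) b)"
  define e where "e z = snd z - bstar \<bullet> fst z" for z :: "(real^'p) \<times> real"
  define N where "N z = (norm (fst z))\<^sup>2" for z :: "(real^'p) \<times> real"
  define f where "f z = (e z)\<^sup>2 + 2 * (e z * ((bstar - b) \<bullet> proj (supp bstar) (fst z)))
                        + c * ((e z)\<^sup>2 + N z) + (norm (b - bstar))\<^sup>2 * N z" for z
  have E: "integrable M (\<lambda>z. (e z)\<^sup>2)" "(\<integral>z. (e z)\<^sup>2 \<partial>M) \<le> s2"
    using U_set_noise_second_moment[OF assms] unfolding e_def by auto
  have X: "integrable M N" "(\<integral>z. N z \<partial>M) \<le> p * s2"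
    using U_set_covariate_second_moment[OF assms] unfolding N_def p_def by auto
  have cross: "integrable M (\<lambda>z. e z * ((bstar - b) \<bullet> proj (supp bstar) (fst z)))"
    "(\<integral>z. e z * ((bstar - b) \<bullet> proj (supp bstar) (fst z)) \<partial>M) = 0"
    using U_set_noise_orthogonal[OF assms, of "bstar - b"] unfolding e_def by auto
  have residual_le: "(snd z - b \<bullet> fst z)\<^sup>2 \<le> f z" for z
    using sq_residual_le[of "e z" bstar b "fst z"]
    by (simp add: e_def f_def c_def N_def norm_minus_commute inner_diff_left)
  have int_f: "integrable M f"
    unfolding f_def using E(1) X(1) cross(1) by simp
  have "(\<integral>z. f z \<partial>M) = (\<integral>z. (e z)\<^sup>2 \<partial>M) + c * ((\<integral>z. (e z)\<^sup>2 \<partial>M) + (\<integral>z. N z \<partial>M))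
                          + (norm (b - bstar))\<^sup>2 * (\<integral>z. N z \<partial>M)"
    unfolding f_def using E(1) X(1) cross by simp
  also have "\<dots> \<le> s2 + c * (s2 + p * s2) + (norm (b - bstar))\<^sup>2 * (p * s2)"
    using E(2) X(2) by (intro add_mono mult_left_mono) (auto simp: c_def)
  also have "\<dots> \<le> s2 + (s2 * p\<^sup>2 * (norm (b - bstar))\<^sup>2 + 2 * s2 * p * c)"
  proof -
    have "1 \<le> p"
      by (simp add: p_def Suc_leI)
    then have "s2 \<le> p * s2"
      using mult_right_mono[of 1 p s2] assms(2) by simp
    then have "c * s2 \<le> c * (p * s2)" "p * s2 \<le> p * p * s2"
      using \<open>1 \<le> p\<close> by (auto simp: c_def mult.assoc intro!: mult_left_mono)
    from mult_left_mono[OF this(2), of "(norm (b - bstar))\<^sup>2"] this(1) show ?thesis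
      by (simp add: algebra_simps power2_eq_square)
  qed
  finally have "(\<integral>z. f z \<partial>M) \<le> s2 + (s2 * p\<^sup>2 * (norm (b - bstar))\<^sup>2 + 2 * s2 * p * c)" .
  moreover have "(\<integral>\<^sup>+ z. ennreal ((snd z - b \<bullet> fst z)\<^sup>2) \<partial>M) \<le> ennreal (\<integral>z. f z \<partial>M)"
  proof -
    have "0 \<le> f z" for z
      using residual_le[of z] by (meson order.trans zero_le_power2)
    then have "(\<integral>\<^sup>+ z. ennreal (f z) \<partial>M) = ennreal (\<integral>z. f z \<partial>M)"
      by (intro nn_integral_eq_integral int_f) auto
    moreover have "(\<integral>\<^sup>+ z. ennreal ((snd z - b \<bullet> fst z)\<^sup>2) \<partial>M) \<le> (\<integral>\<^sup>+ z. ennreal (f z) \<partial>M)"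
      using residual_le by (intro nn_integral_mono ennreal_leI)
    ultimately show ?thesis
      by simp
  qed
  ultimately show ?thesis
    unfolding p_def c_def by (meson ennreal_leI order.trans)
qed

lemma R_oos_le:
  fixes bstar b :: "real^'p" and s2 :: real
  assumes "0 \<le> s2"
  shows "R_oos b (U_set bstar s2) \<le>
    ennreal (s2 + (s2 * (real CARD('p))\<^sup>2 * (norm (b - bstar))\<^sup>2
                  + 2 * s2 * real CARD('p) * norm (proj (- supp bstar) b)))"
  unfolding R_oos_def using U_set_risk_le[OF _ assms] by (intro SUP_least) auto

definition two_point :: "real^'p \<Rightarrow> real \<Rightarrow> real \<Rightarrow> ((real^'p) \<times> real) measure" where
  "two_point v c s = distr (measure_pmf (pmf_of_set UNIV)) borel (\<lambda>t. (v, if t then c + s else c - s))"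

lemma measurable_two_point_sample:
  "(\<lambda>t. (v, if t then c + s else c - s)) \<in> measurable (measure_pmf (pmf_of_set UNIV)) borel"
  by (simp only: measurable_pmf_measure1) auto

lemma sets_two_point: "sets (two_point v c s) = sets borel"
  by (simp add: two_point_def)

lemma prob_space_two_point: "prob_space (two_point v c s)"
  unfolding two_point_def
  by (rule prob_space.prob_space_distr[OF measure_pmf.prob_space_axioms measurable_two_point_sample])

lemma integral_two_point:
  fixes g :: "(real^'p) \<times> real \<Rightarrow> real"
  assumes "g \<in> borel_measurable borel"
  shows "integrable (two_point v c s) g"
    and "(\<integral>z. g z \<partial>two_point v c s) = (g (v, c + s) + g (v, c - s)) / 2"
proof -
  show "integrable (two_point v c s) g"
    unfolding two_point_def integrable_distr_eq[OF measurable_two_point_sample assms]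
    by (rule integrable_measure_pmf_finite) simp
  have "(\<integral>z. g z \<partial>two_point v c s)
      = (\<integral>t. g (v, if t then c + s else c - s) \<partial>measure_pmf (pmf_of_set UNIV))"
    unfolding two_point_def by (rule integral_distr[OF measurable_two_point_sample assms])
  also have "\<dots> = (\<Sum>t\<in>UNIV. g (v, if t then c + s else c - s) * pmf (pmf_of_set UNIV) t)"
    by (rule integral_measure_pmf_real) auto
  also have "\<dots> = (g (v, c + s) + g (v, c - s)) / 2"
    by (simp add: UNIV_bool)
  finally show "(\<integral>z. g z \<partial>two_point v c s) = (g (v, c + s) + g (v, c - s)) / 2" .
qed

lemma nn_integral_two_point:
  fixes g :: "(real^'p) \<times> real \<Rightarrow> real"
  assumes "g \<in> borel_measurable borel" "\<And>z. 0 \<le> g z"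
  shows "(\<integral>\<^sup>+ z. ennreal (g z) \<partial>two_point v c s) = ennreal ((g (v, c + s) + g (v, c - s)) / 2)"
  using nn_integral_eq_integral[OF integral_two_point(1)[OF assms(1)]] integral_two_point(2)[OF assms(1)]
    assms(2) by simp

lemma AE_two_point: "AE z in two_point v c s. fst z = v \<and> (snd z = c + s \<or> snd z = c - s)"
  unfolding two_point_def
  by (subst AE_distr_iff[OF measurable_two_point_sample])
     (auto intro!: borel_closed closed_Collect_conj closed_Collect_disj closed_Collect_eq continuous_intros)

lemma two_point_in_U_set:
  fixes bstar v :: "real^'p"
  assumes "0 \<le> s2" "\<And>j. (v $ j)\<^sup>2 \<le> s2"
  shows "two_point v (bstar \<bullet> v) (sqrt s2) \<in> U_set bstar s2"
proof -
  define c where "c = bstar \<bullet> v"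
  define M where "M = two_point v c (sqrt s2)"
  define F where "F = sigma_xS (supp bstar) M"
  have sets: "sets M = sets borel"
    unfolding M_def by (rule sets_two_point)
  interpret prob_space M
    unfolding M_def by (rule prob_space_two_point)
  interpret finite_measure_subalgebra M F
    unfolding F_def by unfold_locales (rule subalgebra_sigma_xS[OF sets])
  have [measurable]: "snd \<in> borel_measurable borel" "(\<lambda>z. bstar \<bullet> fst z) \<in> borel_measurable borel"
    by (auto intro!: borel_measurable_continuous_onI continuous_intros)
  have int_snd: "integrable M snd" and int_reg: "integrable M (\<lambda>z. bstar \<bullet> fst z)"
    unfolding M_def by (auto intro!: integral_two_point(1))
  have reg_F: "(\<lambda>z. bstar \<bullet> fst z) \<in> borel_measurable F"
    using borel_measurable_sigma_xS[of "\<lambda>w. bstar \<bullet> w" "supp bstar" M]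
    unfolding F_def by (simp add: continuous_on_inner inner_proj_supp)
  have cond_exp: "AE z in M. real_cond_exp M F snd z = bstar \<bullet> fst z"
  proof (rule real_cond_exp_charact[OF _ int_snd int_reg reg_F])
    fix A assume "A \<in> sets F"
    then obtain B where A: "A = (\<lambda>z. proj (supp bstar) (fst z)) -` B \<inter> space M"
      unfolding F_def sigma_xS_def by (subst (asm) sets_vimage_algebra2) auto
    have "A \<in> sets borel"
      using \<open>A \<in> sets F\<close> subalg sets unfolding subalgebra_def by auto
    moreover have ind: "indicator A (v, y) = (indicator A (v, c) :: real)" for y
      unfolding A sets_eq_imp_space_eq[OF sets] by (simp add: indicator_def)
    ultimately show "(\<integral>z\<in>A. snd z \<partial>M) = (\<integral>z\<in>A. bstar \<bullet> fst z \<partial>M)"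
      unfolding set_lebesgue_integral_def M_def
      by (simp add: integral_two_point(2) ind[of "c + sqrt s2"] ind[of "c - sqrt s2"] algebra_simps)
         (simp add: c_def)
  qed
  have "AE z in M. ennreal ((snd z - bstar \<bullet> fst z)\<^sup>2) = ennreal s2"
    using AE_two_point[of v c "sqrt s2"] unfolding M_def
    by eventually_elim (use assms(1) in \<open>auto simp: c_def\<close>)
  then have "AE z in M. nn_cond_exp M F (\<lambda>z. ennreal ((snd z - bstar \<bullet> fst z)\<^sup>2)) z
                      = nn_cond_exp M F (\<lambda>_. ennreal s2) z"
    by (intro nn_cond_exp_cong) (auto simp: measurable_cong_sets[OF sets])
  moreover have "AE z in M. ennreal s2 = nn_cond_exp M F (\<lambda>_. ennreal s2) z"
    by (intro nn_cond_exp_F_meas) simp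
  ultimately have cond_var: "AE z in M. nn_cond_exp M F (\<lambda>z. ennreal ((snd z - bstar \<bullet> fst z)\<^sup>2)) z
                               \<le> ennreal s2"
    by eventually_elim simp
  have moment: "(\<integral>\<^sup>+ z. ennreal ((fst z $ j)\<^sup>2) \<partial>M) \<le> ennreal s2" for j
  proof -
    have "(\<lambda>z::(real^'p) \<times> real. (fst z $ j)\<^sup>2) \<in> borel_measurable borel"
      by (intro borel_measurable_continuous_onI continuous_intros)
    then show ?thesis
      unfolding M_def using assms(2)[of j] by (simp add: nn_integral_two_point ennreal_leI)
  qed
  have "M \<in> U_set bstar s2"
    unfolding U_set_eq using prob_space_axioms sets int_snd cond_exp cond_var moment
    by (simp add: F_def)
  then show ?thesis
    by (simp add: M_def c_def)
qed

lemma R_oos_ge: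
  fixes bstar b :: "real^'p"
  assumes "0 \<le> s2"
  shows "ennreal (s2 + s2 * (norm (b - bstar))\<^sup>2) \<le> R_oos b (U_set bstar s2)"
proof -
  define d where "d = bstar - b"
  define v where "v = sqrt s2 *\<^sub>R sgn d"
  have "\<bar>sgn d $ j\<bar> \<le> 1" for j
    using component_le_norm_cart[of "sgn d" j] by (simp add: norm_sgn split: if_splits)
  then have "(v $ j)\<^sup>2 \<le> s2" for j
    using assms mult_left_mono[of "(sgn d $ j)\<^sup>2" 1 s2]
    by (simp add: v_def power_mult_distrib abs_square_le_1)
  then have U: "two_point v (bstar \<bullet> v) (sqrt s2) \<in> U_set bstar s2"
    by (rule two_point_in_U_set[OF assms])
  have "d \<bullet> sgn d = norm d"
    by (cases "d = 0") (simp_all add: sgn_div_norm dot_square_norm power2_eq_square)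
  then have d_v: "(d \<bullet> v)\<^sup>2 = s2 * (norm (b - bstar))\<^sup>2"
    using assms by (simp add: v_def d_def power_mult_distrib norm_minus_commute)
  have "(\<integral>\<^sup>+ z. ennreal ((snd z - b \<bullet> fst z)\<^sup>2) \<partial>two_point v (bstar \<bullet> v) (sqrt s2))
      = ennreal (((d \<bullet> v + sqrt s2)\<^sup>2 + (d \<bullet> v - sqrt s2)\<^sup>2) / 2)"
    by (subst nn_integral_two_point)
       (auto intro!: borel_measurable_continuous_onI continuous_intros simp: d_def inner_diff_left algebra_simps)
  also have "((d \<bullet> v + sqrt s2)\<^sup>2 + (d \<bullet> v - sqrt s2)\<^sup>2) / 2 = s2 + s2 * (norm (b - bstar))\<^sup>2"
    using assms by (simp add: power2_sum power2_diff d_v)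
  finally show ?thesis
    unfolding R_oos_def
    using SUP_upper[OF U, of "\<lambda>M. \<integral>\<^sup>+ z. ennreal ((snd z - b \<bullet> fst z)\<^sup>2) \<partial>M"] by simp
qed

theorem proposition1:
  fixes bstar :: "real^'p" and s2 :: real
  assumes "s2 > 0"
  shows "R_oos bstar (U_set bstar s2) = ennreal s2 \<and>
    (\<forall>b :: real^'p.
       ennreal (s2 * (norm (b - bstar))\<^sup>2) + R_oos bstar (U_set bstar s2) \<le> R_oos b (U_set bstar s2) \<and>
       R_oos b (U_set bstar s2) \<le> R_oos bstar (U_set bstar s2) +
         ennreal (s2 * (real CARD('p))\<^sup>2 * (norm (b - bstar))\<^sup>2
                  + 2 * s2 * real CARD('p) * norm (proj (- supp bstar) b)))"
proof -
  have s2: "0 \<le> s2"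
    using assms by simp
  have R0: "R_oos bstar (U_set bstar s2) = ennreal s2"
    using R_oos_le[OF s2, of bstar bstar] R_oos_ge[OF s2, of bstar bstar]
    by (simp add: proj_compl_supp_self)
  show ?thesis
  proof (intro conjI allI R0)
    fix b :: "real^'p"
    have "ennreal (s2 + s2 * (norm (b - bstar))\<^sup>2) = ennreal (s2 * (norm (b - bstar))\<^sup>2) + ennreal s2"
      using s2 by (subst ennreal_plus) (auto simp: add.commute)
    with R_oos_ge[OF s2, of b bstar]
    show "ennreal (s2 * (norm (b - bstar))\<^sup>2) + R_oos bstar (U_set bstar s2) \<le> R_oos b (U_set bstar s2)"
      by (simp add: R0)
    have "ennreal (s2 + (s2 * (real CARD('p))\<^sup>2 * (norm (b - bstar))\<^sup>2
                  + 2 * s2 * real CARD('p) * norm (proj (- supp bstar) b)))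
        = ennreal s2 + ennreal (s2 * (real CARD('p))\<^sup>2 * (norm (b - bstar))\<^sup>2
                  + 2 * s2 * real CARD('p) * norm (proj (- supp bstar) b))"
      using s2 by (subst ennreal_plus) auto
    with R_oos_le[OF s2, of b bstar]
    show "R_oos b (U_set bstar s2) \<le> R_oos bstar (U_set bstar s2) +
         ennreal (s2 * (real CARD('p))\<^sup>2 * (norm (b - bstar))\<^sup>2
                  + 2 * s2 * real CARD('p) * norm (proj (- supp bstar) b))"
      by (simp add: R0)
  qed
qed

end
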